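(* Let $R$ be a semiring and $(X,\pi^X)$ an $R$-convex set. An equivalence relation $\sim$ on $X$ is a convex equivalence relation if and only if, for all $p,q\in D_R(X)$ with $p\sim_D q$, we have $\pi^X(p)\sim\pi^X(q)$.
   Context: A semiring is a set $R$ with commutative unital monoid structures $+$ (unit $0$) and $\cdot$ (unit $1$) with $\cdot$ distributing over $+$ and $0\cdot r=0$. $D_R(X)$ is the set of finitely supported $p:X\to R$ with $\sum_xp(x)=1$; $D_R$ is a monad on $\mathsf{Set}$ (pushforward on maps, multiplication $\mu(P)(x)=\sum_qP(q)q(x)$, unit Dirac delta). An $R$-convex set is a $D_R$-algebra $(X,\pi^X:D_R(X)\to X)$; write $\sum_i\alpha_ix_i$ for $\pi^X$ of the formal combination. $\Delta^n_R=D_R(\{0,\dots,n\})$. A convex relation on $X$ is a relation $\sim$ such that for any $\alpha\in\Delta^n_R$, if $x_i\sim y_i$ for all $i$ then $\sum_i\alpha_ix_i\sim\sum_i\alpha_iy_i$; a convex equivalence relation is a convex relation that is an equivalence relation. For an equivalence relation $\sim$ on $X$, $\sim_D$ is the relation on $D_R(X)$ with $p\sim_Dq$ iff $\sum_{y\in[x]}p(y)=\sum_{y\in[x]}q(y)$ for every equivalence class $[x]$. *)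

theory Defs
  imports Main
begin

text \<open>Semirings: commutative, unital, with 0 absorbing; 0 = 1 is allowed
  (we use the classes comm_semiring_0 and comm_monoid_mult, not comm_semiring_1).\<close>

definition supp :: "('x \<Rightarrow> 'r::zero) \<Rightarrow> 'x set" where
  "supp p = {x. p x \<noteq> 0}"

definition dist_set :: "('x \<Rightarrow> 'r::{comm_semiring_0,comm_monoid_mult}) set" where
  "dist_set = {p. finite (supp p) \<and> (\<Sum>x\<in>supp p. p x) = 1}"

definition dist_on :: "'x set \<Rightarrow> ('x \<Rightarrow> 'r::{comm_semiring_0,comm_monoid_mult}) set" where
  "dist_on A = {p \<in> dist_set. supp p \<subseteq> A}"

definition Dmap :: "('x \<Rightarrow> 'y) \<Rightarrow> ('x \<Rightarrow> 'r::{comm_semiring_0,comm_monoid_mult}) \<Rightarrow> 'y \<Rightarrow> 'r" where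
  "Dmap f p = (\<lambda>y. \<Sum>x\<in>{x\<in>supp p. f x = y}. p x)"

definition Dmu :: "(('x \<Rightarrow> 'r) \<Rightarrow> 'r) \<Rightarrow> 'x \<Rightarrow> 'r::{comm_semiring_0,comm_monoid_mult}" where
  "Dmu P = (\<lambda>x. \<Sum>q\<in>supp P. P q * q x)"

definition delta :: "'x \<Rightarrow> 'x \<Rightarrow> 'r::{comm_semiring_0,comm_monoid_mult}" where
  "delta x = (\<lambda>y. if y = x then 1 else 0)"

definition convex_algebra :: "(('x \<Rightarrow> 'r::{comm_semiring_0,comm_monoid_mult}) \<Rightarrow> 'x) \<Rightarrow> bool" where
  "convex_algebra \<pi> \<longleftrightarrow>
     (\<forall>x. \<pi> (delta x) = x) \<and>
     (\<forall>P \<in> dist_on (dist_set :: ('x \<Rightarrow> 'r) set). \<pi> (Dmu P) = \<pi> (Dmap \<pi> P))"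

definition convex_rel :: "(('x \<Rightarrow> 'r::{comm_semiring_0,comm_monoid_mult}) \<Rightarrow> 'x) \<Rightarrow> ('x \<times> 'x) set \<Rightarrow> bool" where
  "convex_rel \<pi> r \<longleftrightarrow>
     (\<forall>n::nat. \<forall>\<alpha> \<in> (dist_on {..n} :: (nat \<Rightarrow> 'r) set). \<forall>xs ys :: nat \<Rightarrow> 'x.
        (\<forall>i\<le>n. (xs i, ys i) \<in> r) \<longrightarrow> (\<pi> (Dmap xs \<alpha>), \<pi> (Dmap ys \<alpha>)) \<in> r)"

definition convex_equiv :: "(('x \<Rightarrow> 'r::{comm_semiring_0,comm_monoid_mult}) \<Rightarrow> 'x) \<Rightarrow> ('x \<times> 'x) set \<Rightarrow> bool" where
  "convex_equiv \<pi> r \<longleftrightarrow> convex_rel \<pi> r \<and> equiv UNIV r"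

definition lift_rel :: "('x \<times> 'x) set \<Rightarrow> ('x \<Rightarrow> 'r::{comm_semiring_0,comm_monoid_mult}) \<Rightarrow> ('x \<Rightarrow> 'r) \<Rightarrow> bool" where
  "lift_rel r p q \<longleftrightarrow>
     (\<forall>x. (\<Sum>y\<in>supp p \<inter> r `` {x}. p y) = (\<Sum>y\<in>supp q \<inter> r `` {x}. q y))"

end

(* Write [x] for the class of x.  The relation p ~_D q says exactly that the pushforwards of p
   and q along x \<mapsto> [x] coincide.  If ~ is convex and \<rho> picks a representative of each class,
   then \<pi> p ~ \<pi> (\<rho>_* p) because each point is related to its representative, and \<rho>_* p factors
   through the pushforward to the quotient, so \<rho>_* p = \<rho>_* q.  Conversely, if x_i ~ y_i then
   \<Sum> \<alpha>_i x_i and \<Sum> \<alpha>_i y_i have the same pushforward to the quotient. *)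

theory Submission
  imports Defs
begin

lemma Dmap_apply: "Dmap f \<alpha> y = (\<Sum>i\<in>supp \<alpha> \<inter> f -` {y}. \<alpha> i)"
  unfolding Dmap_def by (rule sum.cong) auto

lemma Dmap_cong: "(\<And>i. i \<in> supp \<alpha> \<Longrightarrow> f i = g i) \<Longrightarrow> Dmap f \<alpha> = Dmap g \<alpha>"
  unfolding Dmap_def by (intro ext sum.cong) auto

lemma supp_Dmap_subset: "supp (Dmap f \<alpha>) \<subseteq> f ` supp \<alpha>"
proof
  fix y assume "y \<in> supp (Dmap f \<alpha>)"
  then have "Dmap f \<alpha> y \<noteq> 0" by (simp add: supp_def)
  then have "{i \<in> supp \<alpha>. f i = y} \<noteq> {}" unfolding Dmap_def by (metis sum.empty)
  then show "y \<in> f ` supp \<alpha>" by blast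
qed

lemma finite_supp_Dmap: "finite (supp \<alpha>) \<Longrightarrow> finite (supp (Dmap f \<alpha>))"
  by (rule finite_surj[OF _ supp_Dmap_subset])

lemma sum_Dmap:
  assumes "finite (supp \<alpha>)"
  shows "(\<Sum>y\<in>supp (Dmap f \<alpha>) \<inter> A. Dmap f \<alpha> y) = (\<Sum>i\<in>supp \<alpha> \<inter> f -` A. \<alpha> i)"
proof -
  have "(\<Sum>y\<in>supp (Dmap f \<alpha>) \<inter> A. Dmap f \<alpha> y) = (\<Sum>y\<in>f ` (supp \<alpha> \<inter> f -` A). Dmap f \<alpha> y)"
    using assms supp_Dmap_subset[of f \<alpha>]
    by (intro sum.mono_neutral_left) (auto simp: supp_def)
  also have "\<dots> = (\<Sum>y\<in>f ` (supp \<alpha> \<inter> f -` A). \<Sum>i\<in>{i \<in> supp \<alpha> \<inter> f -` A. f i = y}. \<alpha> i)"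
    unfolding Dmap_def by (intro sum.cong) auto
  also have "\<dots> = (\<Sum>i\<in>supp \<alpha> \<inter> f -` A. \<alpha> i)"
    using assms by (intro sum.image_gen[symmetric]) auto
  finally show ?thesis .
qed

lemma Dmap_in_dist_set: "\<alpha> \<in> dist_set \<Longrightarrow> Dmap f \<alpha> \<in> dist_set"
  using sum_Dmap[of \<alpha> f UNIV] finite_supp_Dmap[of \<alpha> f] by (simp add: dist_set_def)

lemma Dmap_comp:
  assumes "finite (supp \<alpha>)"
  shows "Dmap g (Dmap f \<alpha>) = Dmap (g \<circ> f) \<alpha>"
proof
  fix z
  have "Dmap g (Dmap f \<alpha>) z = (\<Sum>i\<in>supp \<alpha> \<inter> f -` g -` {z}. \<alpha> i)"
    using sum_Dmap[OF assms] by (simp add: Dmap_apply)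
  then show "Dmap g (Dmap f \<alpha>) z = Dmap (g \<circ> f) \<alpha> z"
    by (simp add: Dmap_apply vimage_comp)
qed

lemma Dmap_inj_on_apply:
  assumes "inj_on f (supp \<alpha>)" and "i \<in> supp \<alpha>"
  shows "Dmap f \<alpha> (f i) = \<alpha> i"
proof -
  have "supp \<alpha> \<inter> f -` {f i} = {i}"
    using assms by (auto dest: inj_onD)
  then show ?thesis by (simp add: Dmap_apply)
qed

lemma dist_set_obtain_simplex:
  fixes p :: "'x \<Rightarrow> 'r::{comm_semiring_0,comm_monoid_mult}"
  assumes "p \<in> dist_set"
  obtains n and \<alpha> :: "nat \<Rightarrow> 'r" and xs where "\<alpha> \<in> dist_on {..n}" and "Dmap xs \<alpha> = p"
proof -
  have fin: "finite (supp p)" using assms by (simp add: dist_set_def)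
  define n where "n = card (supp p)"
  obtain h where "bij_betw h {..<n} (supp p)"
    using ex_bij_betw_nat_finite[OF fin] by (auto simp: n_def atLeast0LessThan)
  then have inj: "inj_on h {..<n}" and img: "h ` {..<n} = supp p"
    by (simp_all add: bij_betw_def)
  define \<alpha> :: "nat \<Rightarrow> 'r" where "\<alpha> i = (if i < n then p (h i) else 0)" for i
  have supp_\<alpha>: "supp \<alpha> = {..<n}"
  proof -
    have "p (h i) \<noteq> 0" if "i < n" for i
      using img that by (auto simp: supp_def)
    then show ?thesis by (auto simp: supp_def \<alpha>_def)
  qed
  have "Dmap h \<alpha> y = p y" for y
  proof (cases "y \<in> supp p")
    case True
    then obtain i where "i < n" and "y = h i"
      using img by auto
    then show ?thesis
      using Dmap_inj_on_apply[of h \<alpha> i] inj supp_\<alpha> by (simp add: \<alpha>_def)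
  next
    case False
    then have "y \<notin> supp (Dmap h \<alpha>)"
      using supp_Dmap_subset[of h \<alpha>] img supp_\<alpha> by auto
    with False show ?thesis by (simp add: supp_def)
  qed
  then have Dmap_h: "Dmap h \<alpha> = p" ..
  have "(\<Sum>i\<in>supp \<alpha>. \<alpha> i) = (\<Sum>y\<in>supp p. p y)"
    using sum_Dmap[of \<alpha> h UNIV] supp_\<alpha> Dmap_h by simp
  then have "\<alpha> \<in> dist_set"
    using assms supp_\<alpha> by (simp add: dist_set_def)
  moreover have "supp \<alpha> \<subseteq> {..n}"
    unfolding supp_\<alpha> by (simp add: subset_eq)
  ultimately have "\<alpha> \<in> dist_on {..n}"
    by (simp add: dist_on_def)
  then show ?thesis by (rule that[OF _ Dmap_h])
qed

lemma Dmap_class_eq_iff_lift_rel: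
  assumes "equiv UNIV r"
  shows "Dmap (\<lambda>x. r``{x}) p = Dmap (\<lambda>x. r``{x}) q \<longleftrightarrow> lift_rel r p q"
proof -
  have vimage_class: "(\<lambda>y. r``{y}) -` {r``{x}} = r``{x}" for x
    using eq_equiv_class_iff[OF assms] equivE[OF assms] by (auto elim: symE)
  have Dmap_class: "Dmap (\<lambda>y. r``{y}) s (r``{x}) = (\<Sum>y\<in>supp s \<inter> r``{x}. s y)" for s x
    by (simp add: Dmap_apply vimage_class)
  have Dmap_nonclass: "Dmap (\<lambda>y. r``{y}) s C = 0" if "\<forall>x. C \<noteq> r``{x}" for s C
  proof -
    have "(\<lambda>y. r``{y}) -` {C} = {}"
      using that by auto
    then show ?thesis by (simp add: Dmap_apply)
  qed
  show ?thesis
  proof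
    assume eq: "Dmap (\<lambda>x. r``{x}) p = Dmap (\<lambda>x. r``{x}) q"
    show "lift_rel r p q"
      unfolding lift_rel_def
    proof
      fix x
      show "(\<Sum>y\<in>supp p \<inter> r``{x}. p y) = (\<Sum>y\<in>supp q \<inter> r``{x}. q y)"
        using Dmap_class[of p x] Dmap_class[of q x] eq by simp
    qed
  next
    assume lift: "lift_rel r p q"
    show "Dmap (\<lambda>x. r``{x}) p = Dmap (\<lambda>x. r``{x}) q"
    proof
      fix C
      show "Dmap (\<lambda>x. r``{x}) p C = Dmap (\<lambda>x. r``{x}) q C"
      proof (cases "\<exists>x. C = r``{x}")
        case True
        then obtain x where "C = r``{x}" ..
        with lift show ?thesis by (simp add: Dmap_class lift_rel_def)
      next
        case False
        then show ?thesis by (simp add: Dmap_nonclass)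
      qed
    qed
  qed
qed

lemma convex_rel_Dmap:
  assumes "convex_rel \<pi> r" and "p \<in> dist_set" and "\<And>x. (x, f x) \<in> r"
  shows "(\<pi> p, \<pi> (Dmap f p)) \<in> r"
proof -
  obtain n and \<alpha> :: "nat \<Rightarrow> 'b" and xs where \<alpha>: "\<alpha> \<in> dist_on {..n}" and p: "Dmap xs \<alpha> = p"
    using assms(2) by (rule dist_set_obtain_simplex)
  have "(\<pi> (Dmap xs \<alpha>), \<pi> (Dmap (f \<circ> xs) \<alpha>)) \<in> r"
    using assms(1,3) \<alpha> unfolding convex_rel_def by simp
  moreover have "Dmap (f \<circ> xs) \<alpha> = Dmap f p"
    using \<alpha> p Dmap_comp[of \<alpha> f xs] by (simp add: dist_on_def dist_set_def)
  ultimately show ?thesis using p by simp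
qed

lemma lift_rel_Dmap:
  assumes "equiv UNIV r" and "finite (supp \<alpha>)" and "\<And>i. i \<in> supp \<alpha> \<Longrightarrow> (xs i, ys i) \<in> r"
  shows "lift_rel r (Dmap xs \<alpha>) (Dmap ys \<alpha>)"
proof -
  let ?class = "\<lambda>x. r``{x}"
  have "Dmap ?class (Dmap xs \<alpha>) = Dmap (?class \<circ> xs) \<alpha>"
    using assms(2) by (rule Dmap_comp)
  also have "\<dots> = Dmap (?class \<circ> ys) \<alpha>"
    using assms(3) equiv_class_eq[OF assms(1)] by (intro Dmap_cong) simp
  also have "\<dots> = Dmap ?class (Dmap ys \<alpha>)"
    using assms(2) by (rule Dmap_comp[symmetric])
  finally show ?thesis
    using Dmap_class_eq_iff_lift_rel[OF assms(1)] by blast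
qed

lemma convex_equiv_respects_lift_rel:
  assumes "convex_equiv \<pi> r" and "p \<in> dist_set" and "q \<in> dist_set" and "lift_rel r p q"
  shows "(\<pi> p, \<pi> q) \<in> r"
proof -
  have conv: "convex_rel \<pi> r" and equiv: "equiv UNIV r"
    using assms(1) by (simp_all add: convex_equiv_def)
  define pick :: "'a set \<Rightarrow> 'a" where "pick C = (SOME y. y \<in> C)" for C
  define rep where "rep = pick \<circ> (\<lambda>x. r``{x})"
  have "rep x \<in> r``{x}" for x
    unfolding rep_def pick_def comp_def by (rule someI, rule equiv_class_self[OF equiv]) simp
  then have rep: "(x, rep x) \<in> r" for x
    by simp
  have Dmap_rep: "Dmap rep s = Dmap pick (Dmap (\<lambda>x. r``{x}) s)" if "s \<in> dist_set" for s
    using that Dmap_comp[of s pick] by (simp add: rep_def dist_set_def)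
  have "Dmap rep p = Dmap pick (Dmap (\<lambda>x. r``{x}) p)"
    using assms(2) by (rule Dmap_rep)
  also have "\<dots> = Dmap pick (Dmap (\<lambda>x. r``{x}) q)"
    using Dmap_class_eq_iff_lift_rel[OF equiv, THEN iffD2, OF assms(4)] by simp
  also have "\<dots> = Dmap rep q"
    using assms(3) by (rule Dmap_rep[symmetric])
  finally have "Dmap rep p = Dmap rep q" .
  moreover have "(\<pi> p, \<pi> (Dmap rep p)) \<in> r" and "(\<pi> q, \<pi> (Dmap rep q)) \<in> r"
    using convex_rel_Dmap[OF conv _ rep] assms(2,3) by blast+
  moreover have "sym r" and "trans r"
    using equiv by (simp_all add: equiv_def)
  ultimately show ?thesis
    by (metis symD transD)
qed

lemma convex_rel_if_respects_lift_rel: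
  assumes "equiv UNIV r"
    and "\<And>p q. p \<in> dist_set \<Longrightarrow> q \<in> dist_set \<Longrightarrow> lift_rel r p q \<Longrightarrow> (\<pi> p, \<pi> q) \<in> r"
  shows "convex_rel \<pi> r"
  unfolding convex_rel_def
proof (intro allI ballI impI)
  fix n and \<alpha> :: "nat \<Rightarrow> 'b" and xs ys :: "nat \<Rightarrow> 'a"
  assume \<alpha>: "\<alpha> \<in> dist_on {..n}" and related: "\<forall>i\<le>n. (xs i, ys i) \<in> r"
  then have dist: "\<alpha> \<in> dist_set" and supp: "supp \<alpha> \<subseteq> {..n}"
    by (simp_all add: dist_on_def)
  then have "finite (supp \<alpha>)"
    by (simp add: dist_set_def)
  then have "lift_rel r (Dmap xs \<alpha>) (Dmap ys \<alpha>)"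
    using related supp by (intro lift_rel_Dmap[OF assms(1)]) auto
  then show "(\<pi> (Dmap xs \<alpha>), \<pi> (Dmap ys \<alpha>)) \<in> r"
    using assms(2) Dmap_in_dist_set dist by blast
qed

theorem mainTheorem8:
  fixes \<pi> :: "('x \<Rightarrow> 'r::{comm_semiring_0,comm_monoid_mult}) \<Rightarrow> 'x"
    and r :: "('x \<times> 'x) set"
  assumes "convex_algebra \<pi>"
    and "equiv UNIV r"
  shows "convex_equiv \<pi> r \<longleftrightarrow>
         (\<forall>p \<in> dist_set. \<forall>q \<in> dist_set. lift_rel r p q \<longrightarrow> (\<pi> p, \<pi> q) \<in> r)"
proof
  assume "convex_equiv \<pi> r"
  then show "\<forall>p \<in> dist_set. \<forall>q \<in> dist_set. lift_rel r p q \<longrightarrow> (\<pi> p, \<pi> q) \<in> r"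
    using convex_equiv_respects_lift_rel by blast
next
  assume "\<forall>p \<in> dist_set. \<forall>q \<in> dist_set. lift_rel r p q \<longrightarrow> (\<pi> p, \<pi> q) \<in> r"
  then have "convex_rel \<pi> r"
    using convex_rel_if_respects_lift_rel[OF assms(2)] by blast
  with assms(2) show "convex_equiv \<pi> r"
    by (simp add: convex_equiv_def)
qed

end
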